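(* Let $\beta$ be a constant, $K$ a smooth positive function, $C(u)=\beta K(u)$, and $J(u)=\int K(u)\,du$ an antiderivative of $K$. Then the equation $C(u)u_t=z^{-2}\left(K(u)z^{2}u_z\right)_z$ ($z>0$) admits the Lie point symmetry generators $$\widehat Y_1=tz\partial_z+t^2\partial_t-\left(\frac{\beta}{4}z^2+\frac{3}{2}t\right)\frac{J(u)}{K(u)}\partial_u,\quad \widehat Y_2=\frac{z}{2}\partial_z+t\partial_t,\quad \widehat Y_3=\partial_t,$$ $$\widehat Y_4=t\partial_z-\left(\frac{\beta}{2}z+\frac{t}{z}\right)\frac{J(u)}{K(u)}\partial_u,\quad \widehat Y_5=\partial_z-\frac{1}{z}\frac{J(u)}{K(u)}\partial_u,\quad \widehat Y_6=-\frac{J(u)}{K(u)}\partial_u .$$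
   Context: Here $u=u(z,t)$. A vector field $Y=\xi\partial_z+\tau\partial_t+\eta\partial_u$ (coefficients depending on $z,t,u$) is an admitted Lie point symmetry generator of the equation if its second prolongation annihilates $C(u)u_t-K'(u)u_z^2-K(u)u_{zz}-\frac{2}{z}K(u)u_z$ on the solution manifold of the equation (equivalently, the one-parameter local group it generates maps solutions to solutions). *)

theory Defs
  imports "HOL-Analysis.Analysis"
begin

definition smooth_real :: "(real \<Rightarrow> real) \<Rightarrow> bool" where
  "smooth_real f \<longleftrightarrow> (\<forall>n x. ((deriv ^^ n) f) differentiable (at x))"

definition pz :: "(real \<Rightarrow> real \<Rightarrow> real \<Rightarrow> real) \<Rightarrow> real \<Rightarrow> real \<Rightarrow> real \<Rightarrow> real" where
  "pz f z t u = deriv (\<lambda>z'. f z' t u) z"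
definition pt :: "(real \<Rightarrow> real \<Rightarrow> real \<Rightarrow> real) \<Rightarrow> real \<Rightarrow> real \<Rightarrow> real \<Rightarrow> real" where
  "pt f z t u = deriv (\<lambda>t'. f z t' u) t"
definition pu :: "(real \<Rightarrow> real \<Rightarrow> real \<Rightarrow> real) \<Rightarrow> real \<Rightarrow> real \<Rightarrow> real \<Rightarrow> real" where
  "pu f z t u = deriv (\<lambda>u'. f z t u') u"

(* Prolongation coefficients of Y = xi d_z + tau d_t + eta d_u (standard formulas,
   eta^z = D_z eta - u_z D_z xi - u_t D_z tau, eta^t analogous,
   eta^zz = D_z eta^z - u_zz D_z xi - u_zt D_z tau, expanded).
   Jet coordinates: p = u_z, q = u_t, r = u_zz, s = u_zt. *)
definition prol_z where
  "prol_z xi tau eta z t u p q =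
     pz eta z t u + (pu eta z t u - pz xi z t u) * p - pz tau z t u * q
     - pu xi z t u * p^2 - pu tau z t u * p * q"

definition prol_t where
  "prol_t xi tau eta z t u p q =
     pt eta z t u - pt xi z t u * p + (pu eta z t u - pt tau z t u) * q
     - pu xi z t u * p * q - pu tau z t u * q^2"

definition prol_zz where
  "prol_zz xi tau eta z t u p q r s =
     pz (pz eta) z t u + (2 * pu (pz eta) z t u - pz (pz xi) z t u) * p
     - pz (pz tau) z t u * q
     + (pu (pu eta) z t u - 2 * pu (pz xi) z t u) * p^2
     - 2 * pu (pz tau) z t u * p * q
     - pu (pu xi) z t u * p^3
     - pu (pu tau) z t u * p^2 * q
     + (pu eta z t u - 2 * pz xi z t u) * r
     - 2 * pz tau z t u * s
     - 3 * pu xi z t u * p * r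
     - pu tau z t u * q * r
     - 2 * pu tau z t u * p * s"

(* Second prolongation of Y applied to a second-order differential function
   Delta(z,t,u,u_z,u_t,u_zz) (depending on no other second-order derivatives). *)
definition prol2_apply where
  "prol2_apply Delta xi tau eta z t u p q r s =
       xi z t u * deriv (\<lambda>z'. Delta z' t u p q r) z
     + tau z t u * deriv (\<lambda>t'. Delta z t' u p q r) t
     + eta z t u * deriv (\<lambda>u'. Delta z t u' p q r) u
     + prol_z xi tau eta z t u p q * deriv (\<lambda>p'. Delta z t u p' q r) p
     + prol_t xi tau eta z t u p q * deriv (\<lambda>q'. Delta z t u p q' r) q
     + prol_zz xi tau eta z t u p q r s * deriv (\<lambda>r'. Delta z t u p q r') r"

definition admits_symmetry where
  "admits_symmetry Delta xi tau eta \<longleftrightarrow>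
     (\<forall>z t u p q r s. z > 0 \<longrightarrow> Delta z t u p q r = 0 \<longrightarrow>
        prol2_apply Delta xi tau eta z t u p q r s = 0)"

definition heat_eq :: "(real \<Rightarrow> real) \<Rightarrow> (real \<Rightarrow> real) \<Rightarrow>
    real \<Rightarrow> real \<Rightarrow> real \<Rightarrow> real \<Rightarrow> real \<Rightarrow> real \<Rightarrow> real" where
  "heat_eq C K z t u p q r = C u * q - deriv K u * p^2 - K u * r - 2 / z * K u * p"

end

theory Submission
  imports Defs
begin

(* Under the Kirchhoff substitution w = J(u) the equation becomes the linear radial heat equation
   beta w_t = w_zz + (2/z) w_z, and eta = A(z,t) J(u)/K(u) becomes A(z,t) w.  Accordingly, for
   xi = X(z,t), tau = T(t), eta = A(z,t) J(u)/K(u) the symmetry condition on solutions only uses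
   (gK)' = K and (gK)'' = K' for g = J/K, and reduces to the linear determining equations
   T' = 2 X_z,  2 A_z = 2X/z^2 - 2X_z/z - beta X_t + X_zz,  beta A_t = A_zz + (2/z) A_z,
   which each of the six generators satisfies. *)

lemma smooth_real_has_derivative:
  assumes "smooth_real f"
  shows "((deriv ^^ n) f has_real_derivative (deriv ^^ Suc n) f x) (at x)"
  using assms unfolding smooth_real_def by (simp add: DERIV_deriv_iff_real_differentiable)

lemma deriv_eq_on_positive:
  assumes "z > 0" and "\<And>y. y > 0 \<Longrightarrow> f y = h y" and "(h has_real_derivative D) (at z)"
  shows "deriv f z = D"
proof (rule DERIV_imp_deriv)
  show "(f has_real_derivative D) (at z)"
    by (rule has_field_derivative_transform_within_open[of h D z "{0<..}"]) (use assms in auto)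
qed

lemma antiderivative_quotient_derivatives:
  fixes J K K1 K2 :: "real \<Rightarrow> real"
  assumes J: "\<And>u. (J has_real_derivative K u) (at u)"
    and K: "\<And>u. (K has_real_derivative K1 u) (at u)"
    and K1: "\<And>u. (K1 has_real_derivative K2 u) (at u)"
    and K_nz: "\<And>u. K u \<noteq> 0"
  obtains g1 g2 where "\<And>u. ((\<lambda>u. J u / K u) has_real_derivative g1 u) (at u)"
    and "\<And>u. (g1 has_real_derivative g2 u) (at u)"
    and "\<And>u. g1 u * K u + J u / K u * K1 u = K u"
    and "\<And>u. g2 u * K u + 2 * g1 u * K1 u + J u / K u * K2 u = K1 u"
proof -
  define g where "g u = J u / K u" for u
  define g1 where "g1 u = (K u - g u * K1 u) / K u" for u
  define g2 where "g2 u = (K1 u - 2 * g1 u * K1 u - g u * K2 u) / K u" for u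
  have g: "(g has_real_derivative g1 u) (at u)" for u
  proof (rule DERIV_cong)
    show "(g has_real_derivative (K u * K u - J u * K1 u) / (K u * K u)) (at u)"
      unfolding g_def[abs_def] using J K K_nz by (rule DERIV_divide)
  qed (use K_nz[of u] in \<open>simp add: g_def g1_def field_simps\<close>)
  have "(g1 has_real_derivative g2 u) (at u)" for u
  proof -
    have "((\<lambda>u. (K u - g u * K1 u) / K u) has_real_derivative
        ((K1 u - (g1 u * K1 u + K2 u * g u)) * K u - (K u - g u * K1 u) * K1 u) / (K u * K u)) (at u)"
      by (intro DERIV_divide DERIV_diff DERIV_mult g K K1 K_nz)
    moreover have "((K1 u - (g1 u * K1 u + K2 u * g u)) * K u - (K u - g u * K1 u) * K1 u) / (K u * K u) = g2 u"
      using K_nz[of u] by (simp add: g1_def g2_def field_simps)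
    ultimately show ?thesis unfolding g1_def[abs_def] by (rule DERIV_cong)
  qed
  moreover have "g1 u * K u + g u * K1 u = K u" "g2 u * K u + 2 * g1 u * K1 u + g u * K2 u = K1 u" for u
    using K_nz[of u] by (simp_all add: g1_def g2_def field_simps)
  ultimately show thesis using that g unfolding g_def by blast
qed

lemma heat_eq_expanded:
  assumes "\<And>u. (K has_real_derivative K1 u) (at u)" and "\<And>u. C u = \<beta> * K u"
  shows "heat_eq C K = (\<lambda>z t u p q r. \<beta> * K u * q - K1 u * p^2 - K u * r - 2 / z * K u * p)"
proof -
  have "deriv K = K1"
    using assms(1) DERIV_imp_deriv by blast
  then show ?thesis
    by (simp add: heat_eq_def assms(2) fun_eq_iff)
qed

lemma prol2_apply_heat_eq:
  fixes K K1 K2 C :: "real \<Rightarrow> real"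
  assumes K: "\<And>u. (K has_real_derivative K1 u) (at u)"
    and K1: "\<And>u. (K1 has_real_derivative K2 u) (at u)"
    and C: "\<And>u. C u = \<beta> * K u" and z: "z \<noteq> 0"
  shows "prol2_apply (heat_eq C K) xi tau eta z t u p q r s =
      xi z t u * (2 / z^2 * K u * p)
    + eta z t u * (\<beta> * K1 u * q - K2 u * p^2 - K1 u * r - 2 / z * K1 u * p)
    - prol_z xi tau eta z t u p q * (2 * K1 u * p + 2 / z * K u)
    + prol_t xi tau eta z t u p q * (\<beta> * K u)
    - prol_zz xi tau eta z t u p q r s * K u"
proof -
  have "deriv (\<lambda>z. \<beta> * K u * q - K1 u * p^2 - K u * r - 2 / z * K u * p) z = 2 / z^2 * K u * p"
    by (rule DERIV_imp_deriv) (auto intro!: derivative_eq_intros simp: z field_simps power2_eq_square)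
  moreover have "deriv (\<lambda>t. \<beta> * K u * q - K1 u * p^2 - K u * r - 2 / z * K u * p) t = 0"
    by simp
  moreover have "deriv (\<lambda>u. \<beta> * K u * q - K1 u * p^2 - K u * r - 2 / z * K u * p) u
      = \<beta> * K1 u * q - K2 u * p^2 - K1 u * r - 2 / z * K1 u * p"
    by (rule DERIV_imp_deriv) (auto intro!: derivative_eq_intros K K1 simp: z)
  moreover have "deriv (\<lambda>p. \<beta> * K u * q - K1 u * p^2 - K u * r - 2 / z * K u * p) p
      = - (2 * K1 u * p + 2 / z * K u)"
    by (rule DERIV_imp_deriv) (auto intro!: derivative_eq_intros simp: z)
  moreover have "deriv (\<lambda>q. \<beta> * K u * q - K1 u * p^2 - K u * r - 2 / z * K u * p) q = \<beta> * K u"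
    by (rule DERIV_imp_deriv) (auto intro!: derivative_eq_intros simp: z)
  moreover have "deriv (\<lambda>r. \<beta> * K u * q - K1 u * p^2 - K u * r - 2 / z * K u * p) r = - K u"
    by (rule DERIV_imp_deriv) (auto intro!: derivative_eq_intros simp: z)
  ultimately show ?thesis
    unfolding prol2_apply_def heat_eq_expanded[OF K C] by simp (simp add: algebra_simps)
qed

lemma prol_coeffs_separable:
  fixes X A :: "real \<Rightarrow> real \<Rightarrow> real" and T g :: "real \<Rightarrow> real"
  assumes X_z: "\<And>z t. z > 0 \<Longrightarrow> ((\<lambda>z. X z t) has_real_derivative Xz z t) (at z)"
    and X_zz: "\<And>z t. z > 0 \<Longrightarrow> ((\<lambda>z. Xz z t) has_real_derivative Xzz z t) (at z)"
    and X_t: "\<And>z t. z > 0 \<Longrightarrow> ((\<lambda>t. X z t) has_real_derivative Xt z t) (at t)"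
    and T_t: "\<And>t. (T has_real_derivative Tt t) (at t)"
    and A_z: "\<And>z t. z > 0 \<Longrightarrow> ((\<lambda>z. A z t) has_real_derivative Az z t) (at z)"
    and A_zz: "\<And>z t. z > 0 \<Longrightarrow> ((\<lambda>z. Az z t) has_real_derivative Azz z t) (at z)"
    and A_t: "\<And>z t. z > 0 \<Longrightarrow> ((\<lambda>t. A z t) has_real_derivative At z t) (at t)"
    and g: "\<And>u. (g has_real_derivative g1 u) (at u)"
    and g1: "\<And>u. (g1 has_real_derivative g2 u) (at u)"
    and z: "z > 0"
  shows "prol_z (\<lambda>z t u. X z t) (\<lambda>z t u. T t) (\<lambda>z t u. A z t * g u) z t u p q
      = Az z t * g u + (A z t * g1 u - Xz z t) * p"
    and "prol_t (\<lambda>z t u. X z t) (\<lambda>z t u. T t) (\<lambda>z t u. A z t * g u) z t u p q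
      = At z t * g u - Xt z t * p + (A z t * g1 u - Tt t) * q"
    and "prol_zz (\<lambda>z t u. X z t) (\<lambda>z t u. T t) (\<lambda>z t u. A z t * g u) z t u p q r s
      = Azz z t * g u + (2 * Az z t * g1 u - Xzz z t) * p + A z t * g2 u * p^2
        + (A z t * g1 u - 2 * Xz z t) * r"
proof -
  let ?xi = "\<lambda>z t u. X z t" and ?tau = "\<lambda>z t (u::real). T t" and ?eta = "\<lambda>z t u. A z t * g u"
  have pz_xi: "pz ?xi z' t u = Xz z' t" if "z' > 0" for z' t u
    unfolding pz_def using X_z[OF that] by (rule DERIV_imp_deriv)
  have pz_eta: "pz ?eta z' t u = Az z' t * g u" if "z' > 0" for z' t u
    unfolding pz_def by (rule DERIV_imp_deriv) (auto intro!: derivative_eq_intros A_z that)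
  have pzz_xi: "pz (pz ?xi) z t u = Xzz z t"
    unfolding pz_def[of "pz ?xi"] by (rule deriv_eq_on_positive[OF z _ X_zz[OF z]]) (rule pz_xi)
  have pzz_eta: "pz (pz ?eta) z t u = Azz z t * g u"
    unfolding pz_def[of "pz ?eta"]
    by (rule deriv_eq_on_positive[OF z _ DERIV_cmult_right[OF A_zz[OF z]]]) (rule pz_eta)
  have pzu_eta: "pu (pz ?eta) z t u = Az z t * g1 u"
    unfolding pu_def pz_eta[OF z] by (rule DERIV_imp_deriv) (auto intro!: derivative_eq_intros g)
  have pt_xi: "pt ?xi z t u = Xt z t"
    unfolding pt_def using X_t[OF z] by (rule DERIV_imp_deriv)
  have pt_tau: "pt ?tau z t u = Tt t"
    unfolding pt_def using T_t by (rule DERIV_imp_deriv)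
  have pt_eta: "pt ?eta z t u = At z t * g u"
    unfolding pt_def by (rule DERIV_imp_deriv) (auto intro!: derivative_eq_intros A_t z)
  have pu_eta: "pu ?eta z t u' = A z t * g1 u'" for u'
    unfolding pu_def by (rule DERIV_imp_deriv) (auto intro!: derivative_eq_intros g)
  have puu_eta: "pu (pu ?eta) z t u = A z t * g2 u"
    unfolding pu_def[of "pu ?eta"] pu_eta by (rule DERIV_imp_deriv) (auto intro!: derivative_eq_intros g1)
  have vanishing: "pu ?xi z t u = 0" "pu (pz ?xi) z t u = 0" "pu (pu ?xi) z t u = 0"
    "pz ?tau z t u = 0" "pz (pz ?tau) z t u = 0" "pu ?tau z t u = 0"
    "pu (pz ?tau) z t u = 0" "pu (pu ?tau) z t u = 0"
    by (simp_all add: pz_def pu_def)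
  show "prol_z ?xi ?tau ?eta z t u p q = Az z t * g u + (A z t * g1 u - Xz z t) * p"
    and "prol_t ?xi ?tau ?eta z t u p q = At z t * g u - Xt z t * p + (A z t * g1 u - Tt t) * q"
    and "prol_zz ?xi ?tau ?eta z t u p q r s = Azz z t * g u + (2 * Az z t * g1 u - Xzz z t) * p
        + A z t * g2 u * p^2 + (A z t * g1 u - 2 * Xz z t) * r"
    unfolding prol_z_def prol_t_def prol_zz_def pz_xi[OF z] pz_eta[OF z] pzz_xi pzz_eta pzu_eta
      pt_xi pt_tau pt_eta pu_eta puu_eta vanishing
    by (simp_all add: algebra_simps)
qed

lemma heat_eq_admits_separable_symmetry:
  fixes K K1 K2 J C T Tt :: "real \<Rightarrow> real" and X Xz Xzz Xt A Az Azz At :: "real \<Rightarrow> real \<Rightarrow> real"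
  assumes K: "\<And>u. (K has_real_derivative K1 u) (at u)"
    and K1: "\<And>u. (K1 has_real_derivative K2 u) (at u)"
    and K_nz: "\<And>u. K u \<noteq> 0"
    and C: "\<And>u. C u = \<beta> * K u"
    and J: "\<And>u. (J has_real_derivative K u) (at u)"
    and X_z: "\<And>z t. z > 0 \<Longrightarrow> ((\<lambda>z. X z t) has_real_derivative Xz z t) (at z)"
    and X_zz: "\<And>z t. z > 0 \<Longrightarrow> ((\<lambda>z. Xz z t) has_real_derivative Xzz z t) (at z)"
    and X_t: "\<And>z t. z > 0 \<Longrightarrow> ((\<lambda>t. X z t) has_real_derivative Xt z t) (at t)"
    and T_t: "\<And>t. (T has_real_derivative Tt t) (at t)"
    and A_z: "\<And>z t. z > 0 \<Longrightarrow> ((\<lambda>z. A z t) has_real_derivative Az z t) (at z)"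
    and A_zz: "\<And>z t. z > 0 \<Longrightarrow> ((\<lambda>z. Az z t) has_real_derivative Azz z t) (at z)"
    and A_t: "\<And>z t. z > 0 \<Longrightarrow> ((\<lambda>t. A z t) has_real_derivative At z t) (at t)"
    and det_T: "\<And>z t. z > 0 \<Longrightarrow> Tt t = 2 * Xz z t"
    and det_A: "\<And>z t. z > 0 \<Longrightarrow> 2 * Az z t = 2 * X z t / z^2 - 2 * Xz z t / z - \<beta> * Xt z t + Xzz z t"
    and det_A_heat: "\<And>z t. z > 0 \<Longrightarrow> \<beta> * At z t = Azz z t + 2 / z * Az z t"
  shows "admits_symmetry (heat_eq C K)
    (\<lambda>z t u. X z t) (\<lambda>z t u. T t) (\<lambda>z t u. A z t * (J u / K u))"
  unfolding admits_symmetry_def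
proof (intro allI impI)
  fix z t u p q r s :: real
  assume z: "z > 0" and sol: "heat_eq C K z t u p q r = 0"
  obtain g1 g2 where g: "\<And>u. ((\<lambda>u. J u / K u) has_real_derivative g1 u) (at u)"
    and g1: "\<And>u. (g1 has_real_derivative g2 u) (at u)"
    and g1_eq: "\<And>u. g1 u * K u + J u / K u * K1 u = K u"
    and g2_eq: "\<And>u. g2 u * K u + 2 * g1 u * K1 u + J u / K u * K2 u = K1 u"
    using antiderivative_quotient_derivatives[OF J K K1 K_nz] by blast
  have sol': "\<beta> * K u * q - K1 u * p^2 - K u * r - 2 / z * K u * p = 0"
    using sol by (simp add: heat_eq_expanded[OF K C])
  have det: "Tt t - 2 * Xz z t = 0"
      "2 * X z t / z^2 - 2 * Xz z t / z - \<beta> * Xt z t + Xzz z t - 2 * Az z t = 0"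
      "\<beta> * At z t - Azz z t - 2 / z * Az z t = 0"
    using det_T[OF z, of t] det_A[OF z, of t] det_A_heat[OF z, of t] by simp_all
  have "prol2_apply (heat_eq C K) (\<lambda>z t u. X z t) (\<lambda>z t u. T t) (\<lambda>z t u. A z t * (J u / K u)) z t u p q r s
      = (g1 u * K u + J u / K u * K1 u - K u) * (\<beta> * A z t * q - 2 / z * A z t * p - 2 * Az z t * p - A z t * r)
      - A z t * p^2 * (g2 u * K u + 2 * g1 u * K1 u + J u / K u * K2 u - K1 u)
      + (A z t - 2 * Xz z t) * (\<beta> * K u * q - K1 u * p^2 - K u * r - 2 / z * K u * p)
      - \<beta> * K u * q * (Tt t - 2 * Xz z t)
      + K u * p * (2 * X z t / z^2 - 2 * Xz z t / z - \<beta> * Xt z t + Xzz z t - 2 * Az z t)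
      + J u / K u * K u * (\<beta> * At z t - Azz z t - 2 / z * Az z t)"
    using z
    by (simp only: prol2_apply_heat_eq[OF K K1 C z[THEN dual_order.strict_implies_not_eq]]
        prol_coeffs_separable[OF X_z X_zz X_t T_t A_z A_zz A_t g g1 z])
      (simp add: field_simps power2_eq_square)
  also have "\<dots> = 0"
    using g1_eq[of u] g2_eq[of u] sol' det by simp
  finally show "prol2_apply (heat_eq C K) (\<lambda>z t u. X z t) (\<lambda>z t u. T t)
      (\<lambda>z t u. A z t * (J u / K u)) z t u p q r s = 0" .
qed

theorem mainTheorem5:
  fixes \<beta> :: real and K C J :: "real \<Rightarrow> real"
  assumes K_smooth: "smooth_real K"
    and K_pos: "\<And>u. K u > 0"
    and C_def: "\<And>u. C u = \<beta> * K u"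
    and J_anti: "\<And>u. (J has_real_derivative K u) (at u)"
  shows
    "(admits_symmetry (heat_eq C K)
        (\<lambda>z t u. t * z) (\<lambda>z t u. t^2)
        (\<lambda>z t u. - (\<beta> / 4 * z^2 + 3 / 2 * t) * (J u / K u))) \<and>
     (admits_symmetry (heat_eq C K)
        (\<lambda>z t u. z / 2) (\<lambda>z t u. t) (\<lambda>z t u. 0)) \<and>
     (admits_symmetry (heat_eq C K)
        (\<lambda>z t u. 0) (\<lambda>z t u. 1) (\<lambda>z t u. 0)) \<and>
     (admits_symmetry (heat_eq C K)
        (\<lambda>z t u. t) (\<lambda>z t u. 0)
        (\<lambda>z t u. - (\<beta> / 2 * z + t / z) * (J u / K u))) \<and>
     (admits_symmetry (heat_eq C K)
        (\<lambda>z t u. 1) (\<lambda>z t u. 0) (\<lambda>z t u. - (1 / z) * (J u / K u))) \<and>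
     (admits_symmetry (heat_eq C K)
        (\<lambda>z t u. 0) (\<lambda>z t u. 0) (\<lambda>z t u. - (J u / K u)))"
proof -
  have K: "(K has_real_derivative deriv K u) (at u)" for u
    using smooth_real_has_derivative[OF K_smooth, of 0] by simp
  have K': "(deriv K has_real_derivative deriv (deriv K) u) (at u)" for u
    using smooth_real_has_derivative[OF K_smooth, of 1] by simp
  note symmetry = heat_eq_admits_separable_symmetry
    [OF K K' K_pos[THEN dual_order.strict_implies_not_eq] C_def J_anti]
  have Y1: "admits_symmetry (heat_eq C K) (\<lambda>z t u. t * z) (\<lambda>z t u. t^2)
      (\<lambda>z t u. - (\<beta> / 4 * z^2 + 3 / 2 * t) * (J u / K u))"
    by (rule symmetry[where Xz = "\<lambda>z t. t" and Xzz = "\<lambda>z t. 0" and Xt = "\<lambda>z t. z" and Tt = "\<lambda>t. 2 * t"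
          and Az = "\<lambda>z t. - \<beta> / 2 * z" and Azz = "\<lambda>z t. - \<beta> / 2" and At = "\<lambda>z t. - 3 / 2"])
      (auto intro!: derivative_eq_intros simp: field_simps power2_eq_square)
  have Y2: "admits_symmetry (heat_eq C K) (\<lambda>z t u. z / 2) (\<lambda>z t u. t) (\<lambda>z t u. 0 * (J u / K u))"
    by (rule symmetry[where Xz = "\<lambda>z t. 1 / 2" and Xzz = "\<lambda>z t. 0" and Xt = "\<lambda>z t. 0" and Tt = "\<lambda>t. 1"
          and Az = "\<lambda>z t. 0" and Azz = "\<lambda>z t. 0" and At = "\<lambda>z t. 0"])
      (auto intro!: derivative_eq_intros simp: field_simps power2_eq_square)
  have Y3: "admits_symmetry (heat_eq C K) (\<lambda>z t u. 0) (\<lambda>z t u. 1) (\<lambda>z t u. 0 * (J u / K u))"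
    by (rule symmetry[where Xz = "\<lambda>z t. 0" and Xzz = "\<lambda>z t. 0" and Xt = "\<lambda>z t. 0" and Tt = "\<lambda>t. 0"
          and Az = "\<lambda>z t. 0" and Azz = "\<lambda>z t. 0" and At = "\<lambda>z t. 0"])
      (auto intro!: derivative_eq_intros)
  have Y4: "admits_symmetry (heat_eq C K) (\<lambda>z t u. t) (\<lambda>z t u. 0)
      (\<lambda>z t u. - (\<beta> / 2 * z + t / z) * (J u / K u))"
    by (rule symmetry[where Xz = "\<lambda>z t. 0" and Xzz = "\<lambda>z t. 0" and Xt = "\<lambda>z t. 1" and Tt = "\<lambda>t. 0"
          and Az = "\<lambda>z t. - \<beta> / 2 + t / z^2" and Azz = "\<lambda>z t. - 2 * t / z^3" and At = "\<lambda>z t. - 1 / z"])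
      (auto intro!: derivative_eq_intros simp: field_simps power2_eq_square power3_eq_cube)
  have Y5: "admits_symmetry (heat_eq C K) (\<lambda>z t u. 1) (\<lambda>z t u. 0) (\<lambda>z t u. - (1 / z) * (J u / K u))"
    by (rule symmetry[where Xz = "\<lambda>z t. 0" and Xzz = "\<lambda>z t. 0" and Xt = "\<lambda>z t. 0" and Tt = "\<lambda>t. 0"
          and Az = "\<lambda>z t. 1 / z^2" and Azz = "\<lambda>z t. - 2 / z^3" and At = "\<lambda>z t. 0"])
      (auto intro!: derivative_eq_intros simp: field_simps power2_eq_square power3_eq_cube)
  have Y6: "admits_symmetry (heat_eq C K) (\<lambda>z t u. 0) (\<lambda>z t u. 0) (\<lambda>z t u. (- 1) * (J u / K u))"
    by (rule symmetry[where Xz = "\<lambda>z t. 0" and Xzz = "\<lambda>z t. 0" and Xt = "\<lambda>z t. 0" and Tt = "\<lambda>t. 0"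
          and Az = "\<lambda>z t. 0" and Azz = "\<lambda>z t. 0" and At = "\<lambda>z t. 0"])
      (auto intro!: derivative_eq_intros)
  show ?thesis
    using Y1 Y2 Y3 Y4 Y5 Y6 by simp
qed

end
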